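(* Let $G$ be a graph, $R$ a connected subset of $V(G)$, $s_R\in R$, and let $\mathcal{P}$ be an $R$-shortest path collection. Then for all $u_1,u_2\in U_{\mathcal{P}}$, if $\widehat{\operatorname{prof}}_{R,\mathcal{P}}[u_1]=\widehat{\operatorname{prof}}_{R,\mathcal{P}}[u_2]$ then $\operatorname{prof}_{R,s_R}[u_1]=\operatorname{prof}_{R,s_R}[u_2]$.
   Context: $G$ is an unweighted undirected graph with shortest-path distance $\mathrm{dist}$, and $\mathrm{dist}(v,R)=\min_{y\in R}\mathrm{dist}(v,y)$; $R$ is connected if $G[R]$ is connected. $|Q|$ is the number of edges of a path $Q$, $P[a,b]$ the subpath between $a$ and $b$. For $z\in V(G)$ and $x\in R$, the distance profile $\operatorname{prof}_{R,x}[z]\colon R\to\mathbb{Z}$ is $\operatorname{prof}_{R,x}[z](s)=\mathrm{dist}(z,s)-\mathrm{dist}(z,x)$. Milestones: for a path $P$ from a vertex $v^P$ to a vertex $x^P\in R$ with $|P|=\mathrm{dist}(v^P,R)$, order $V(P)$ from $v^P$ towards $x^P$; $v\in V(P)$ is a milestone of $P$ if $v=x^P$ or $\operatorname{prof}_{R,x^P}[v]\ne \operatorname{prof}_{R,x^P}[u]$ where $u$ is the next vertex after $v$ towards $x^P$. An $R$-shortest path collection is a collection $\mathcal{P}$ of paths in $G$ such that every $P\in\mathcal{P}$ is a path from some $v^P\in V(G)$ to some $x^P\in R$ with $|P|=\mathrm{dist}(v^P,R)$, and $R\subseteq\bigcup_{P\in\mathcal{P}}V(P)$. Let $H_{\mathcal{P}}$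 be the union of the paths of $\mathcal{P}$. A vertex is an anchor vertex if it has degree more than two in $H_{\mathcal{P}}$ or it is a milestone of some $P\in\mathcal{P}$; $A_R(\mathcal{P})$ is the set of anchor vertices. For $P\in\mathcal{P}$ and an anchor $w\in V(P)$, the prefix of $w$ in $P$ is the vertex set of the maximal subpath $Q$ of $P[v^P,w]$ such that $w$ is the only anchor vertex of $P$ in $Q$. Let $U_{\mathcal{P}}=V(G)\setminus\bigcup_{P\in\mathcal{P}}V(P)$. For $u\in U_{\mathcal{P}}$ and $w\in A_R(\mathcal{P})$, define $\widehat{\mathrm{dist}}(u,w)=\min\{|Q_{u,z}|+|P[z,w]| : P\in\mathcal{P},\ w\in V(P),\ z \text{ in the prefix of } w \text{ in } P\}$, where $Q_{u,z}$ is a shortest path among the paths from $u$ to $z$ all of whose internal vertices lie in $U_{\mathcal{P}}$ (terms for which no such path exists are omitted, and $\widehat{\mathrm{dist}}(u,w)=\infty$ if no term remains). The anchor-distance profile is $\operatorname{prof}^*_{R,\mathcal{P}}[u](w)=\widehat{\mathrm{dist}}(u,w)+\mathrm{dist}(w,R)-\mathrm{dist}(u,R)$ for $w\in A_R(\mathcal{P})$, and $\widehat{\operatorname{prof}}_{R,\mathcal{P}}[u](w)=\min\{\operatorname{prof}^*_{R,\mathcal{P}}[u](w),|R|+1\}$. *)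

theory Defs
  imports Main "HOL-Library.Extended_Nat"
begin

definition graph :: "'a set \<Rightarrow> ('a \<Rightarrow> 'a \<Rightarrow> bool) \<Rightarrow> bool" where
  "graph V E \<longleftrightarrow> finite V \<and> (\<forall>x y. E x y \<longrightarrow> x \<in> V \<and> y \<in> V)
     \<and> (\<forall>x y. E x y \<longrightarrow> E y x) \<and> (\<forall>x. \<not> E x x)"

definition is_path :: "'a set \<Rightarrow> ('a \<Rightarrow> 'a \<Rightarrow> bool) \<Rightarrow> 'a list \<Rightarrow> bool" where
  "is_path V E xs \<longleftrightarrow> xs \<noteq> [] \<and> set xs \<subseteq> V \<and> distinct xs
     \<and> (\<forall>i. Suc i < length xs \<longrightarrow> E (xs ! i) (xs ! Suc i))"

definition plen :: "'a list \<Rightarrow> nat" where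
  "plen xs = length xs - 1"

definition connected_set :: "('a \<Rightarrow> 'a \<Rightarrow> bool) \<Rightarrow> 'a set \<Rightarrow> bool" where
  "connected_set E S \<longleftrightarrow> (\<forall>a\<in>S. \<forall>b\<in>S. \<exists>xs. is_path S E xs \<and> hd xs = a \<and> last xs = b)"

definition gdist :: "'a set \<Rightarrow> ('a \<Rightarrow> 'a \<Rightarrow> bool) \<Rightarrow> 'a \<Rightarrow> 'a \<Rightarrow> nat" where
  "gdist V E u v = (LEAST n. \<exists>xs. is_path V E xs \<and> hd xs = u \<and> last xs = v \<and> plen xs = n)"

definition setdist :: "'a set \<Rightarrow> ('a \<Rightarrow> 'a \<Rightarrow> bool) \<Rightarrow> 'a \<Rightarrow> 'a set \<Rightarrow> nat" where
  "setdist V E v R = Min (gdist V E v ` R)"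

definition prof :: "'a set \<Rightarrow> ('a \<Rightarrow> 'a \<Rightarrow> bool) \<Rightarrow> 'a \<Rightarrow> 'a \<Rightarrow> 'a \<Rightarrow> int" where
  "prof V E x z s = int (gdist V E z s) - int (gdist V E z x)"

definition R_shortest_path_collection ::
  "'a set \<Rightarrow> ('a \<Rightarrow> 'a \<Rightarrow> bool) \<Rightarrow> 'a set \<Rightarrow> 'a list set \<Rightarrow> bool" where
  "R_shortest_path_collection V E R Ps \<longleftrightarrow>
     (\<forall>P\<in>Ps. is_path V E P \<and> last P \<in> R \<and> plen P = setdist V E (hd P) R)
     \<and> R \<subseteq> (\<Union>P\<in>Ps. set P)"

definition milestone :: "'a set \<Rightarrow> ('a \<Rightarrow> 'a \<Rightarrow> bool) \<Rightarrow> 'a set \<Rightarrow> 'a list \<Rightarrow> 'a \<Rightarrow> bool" where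
  "milestone V E R P v \<longleftrightarrow> (\<exists>i<length P. P ! i = v \<and>
     (Suc i = length P \<or>
      (\<exists>s\<in>R. prof V E (last P) (P ! i) s \<noteq> prof V E (last P) (P ! Suc i) s)))"

definition H_edge :: "'a list set \<Rightarrow> 'a \<Rightarrow> 'a \<Rightarrow> bool" where
  "H_edge Ps x y \<longleftrightarrow> (\<exists>P\<in>Ps. \<exists>i. Suc i < length P \<and>
     ((P ! i = x \<and> P ! Suc i = y) \<or> (P ! i = y \<and> P ! Suc i = x)))"

definition anchors :: "'a set \<Rightarrow> ('a \<Rightarrow> 'a \<Rightarrow> bool) \<Rightarrow> 'a set \<Rightarrow> 'a list set \<Rightarrow> 'a set" where
  "anchors V E R Ps = {v. card {y. H_edge Ps v y} > 2 \<or> (\<exists>P\<in>Ps. milestone V E R P v)}"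

definition idx :: "'a list \<Rightarrow> 'a \<Rightarrow> nat" where
  "idx P v = (THE i. i < length P \<and> P ! i = v)"

text \<open>Prefix of w in P: vertices of the maximal subpath of P[v^P,w] ending in w
  containing no anchor of P other than w.\<close>
definition prefix_of :: "'a set \<Rightarrow> 'a list \<Rightarrow> 'a \<Rightarrow> 'a set" where
  "prefix_of A P w = {P ! k | k. k \<le> idx P w \<and> (\<forall>m. k \<le> m \<and> m < idx P w \<longrightarrow> P ! m \<notin> A)}"

definition U_set :: "'a set \<Rightarrow> 'a list set \<Rightarrow> 'a set" where
  "U_set V Ps = V - (\<Union>P\<in>Ps. set P)"

text \<open>|Q_{u,z}|: length of a shortest u-z path with all internal vertices in U
  (infinity if none exists).\<close>
definition rdist :: "'a set \<Rightarrow> ('a \<Rightarrow> 'a \<Rightarrow> bool) \<Rightarrow> 'a set \<Rightarrow> 'a \<Rightarrow> 'a \<Rightarrow> enat" where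
  "rdist V E U u z = (INF xs \<in> {xs. is_path V E xs \<and> hd xs = u \<and> last xs = z \<and>
       (\<forall>k. 0 < k \<and> k < length xs - 1 \<longrightarrow> xs ! k \<in> U)}. enat (plen xs))"

definition dist_hat :: "'a set \<Rightarrow> ('a \<Rightarrow> 'a \<Rightarrow> bool) \<Rightarrow> 'a set \<Rightarrow> 'a list set \<Rightarrow> 'a \<Rightarrow> 'a \<Rightarrow> enat" where
  "dist_hat V E R Ps u w = (INF P \<in> {P\<in>Ps. w \<in> set P}.
      INF z \<in> prefix_of (anchors V E R Ps) P w.
        rdist V E (U_set V Ps) u z + enat (idx P w - idx P z))"

definition prof_hat :: "'a set \<Rightarrow> ('a \<Rightarrow> 'a \<Rightarrow> bool) \<Rightarrow> 'a set \<Rightarrow> 'a list set \<Rightarrow> 'a \<Rightarrow> 'a \<Rightarrow> int" where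
  "prof_hat V E R Ps u w = (case dist_hat V E R Ps u w of
       enat d \<Rightarrow> min (int d + int (setdist V E w R) - int (setdist V E u R)) (int (card R) + 1)
     | \<infinity> \<Rightarrow> int (card R) + 1)"

end

theory Submission
  imports Defs
begin

text \<open>For u \<in> U and s \<in> R put excess u s = dist(u,s) - dist(u,R); then
  prof_{R,s_R}[u](s) = excess u s - excess u s_R, so it suffices to show that the
  truncated anchor-distance profile of u determines excess u s. We show
  excess u s = min over anchors w of hat-prof[u](w) + dist(w,s) - dist(w,R).
  The inequality \<le> is the triangle inequality through w, the truncation at |R|+1
  being harmless because excess u s \<le> |R|. For equality, follow a shortest u-s path
  to its first vertex z outside U, then the path of the collection through z up to
  the next anchor w: as no vertex strictly between z and w is a milestone, the
  distance to s drops by one at each of these steps.\<close>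

section \<open>Paths and distances\<close>

lemma is_path_iff_successively:
  "is_path V E xs \<longleftrightarrow> xs \<noteq> [] \<and> set xs \<subseteq> V \<and> distinct xs \<and> successively E xs"
  unfolding is_path_def successively_conv_nth by blast

lemma walk_contains_path:
  "xs \<noteq> [] \<Longrightarrow> set xs \<subseteq> V \<Longrightarrow> successively E xs \<Longrightarrow>
   \<exists>ys. is_path V E ys \<and> hd ys = hd xs \<and> last ys = last xs \<and> length ys \<le> length xs"
proof (induction xs rule: length_induct)
  case (1 xs)
  show ?case
  proof (cases "distinct xs")
    case True
    then show ?thesis using 1 by (auto simp: is_path_iff_successively)
  next
    case False
    then obtain as bs cs y where xs: "xs = as @ [y] @ bs @ [y] @ cs"
      using not_distinct_decomp by blast
    let ?ys = "as @ y # cs"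
    have "successively E ?ys" using 1(4) unfolding xs
      by (auto simp: successively_append_iff successively_Cons)
    moreover have "set ?ys \<subseteq> V" using 1(3) xs by auto
    moreover have shorter: "length ?ys < length xs" using xs by simp
    moreover have hd: "hd ?ys = hd xs" using xs by (cases as) auto
    moreover have last: "last ?ys = last xs" using xs by (cases cs) auto
    ultimately show ?thesis using 1(1) by fastforce
  qed
qed

lemma gdist_le_plen: "is_path V E xs \<Longrightarrow> gdist V E (hd xs) (last xs) \<le> plen xs"
  unfolding gdist_def by (rule Least_le) blast

lemma gdist_le_walk_length:
  "xs \<noteq> [] \<Longrightarrow> set xs \<subseteq> V \<Longrightarrow> successively E xs \<Longrightarrow>
   gdist V E (hd xs) (last xs) \<le> length xs - 1"
  using walk_contains_path[of xs V E] gdist_le_plen[of V E] unfolding plen_def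
  by (metis diff_le_mono order_trans)

lemma gdist_realized:
  assumes "connected_set E V" "u \<in> V" "v \<in> V"
  obtains xs where "is_path V E xs" "hd xs = u" "last xs = v" "plen xs = gdist V E u v"
proof -
  have "\<exists>n xs. is_path V E xs \<and> hd xs = u \<and> last xs = v \<and> plen xs = n"
    using assms unfolding connected_set_def by blast
  from LeastI_ex[OF this] show ?thesis using that unfolding gdist_def by blast
qed

lemma gdist_triangle:
  assumes "connected_set E V" "u \<in> V" "v \<in> V" "w \<in> V"
  shows "gdist V E u w \<le> gdist V E u v + gdist V E v w"
proof -
  obtain p where p: "is_path V E p" "hd p = u" "last p = v" "plen p = gdist V E u v"
    using gdist_realized assms by metis
  obtain q where q: "is_path V E q" "hd q = v" "last q = w" "plen q = gdist V E v w"
    using gdist_realized assms by metis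
  obtain q' where q': "q = v # q'" using q by (cases q) (auto simp: is_path_def)
  have "successively E (p @ q')"
    using p q q' by (auto simp: is_path_iff_successively successively_append_iff successively_Cons)
  then have "gdist V E (hd (p @ q')) (last (p @ q')) \<le> length (p @ q') - 1"
    by (intro gdist_le_walk_length) (use p q q' in \<open>auto simp: is_path_def\<close>)
  moreover have "hd (p @ q') = u" using p by (auto simp: is_path_def)
  moreover have "last (p @ q') = w" using p q q' by (cases q') auto
  ultimately show ?thesis using p q q' by (auto simp: plen_def is_path_def)
qed

lemma is_path_subpath:
  assumes "is_path V E P" "i \<le> j" "j < length P"
  shows "is_path V E (drop i (take (Suc j) P)) \<and> hd (drop i (take (Suc j) P)) = P ! i
    \<and> last (drop i (take (Suc j) P)) = P ! j \<and> plen (drop i (take (Suc j) P)) = j - i"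
proof -
  let ?Q = "drop i (take (Suc j) P)"
  have len: "length ?Q = Suc j - i" using assms by simp
  have nth: "\<And>m. m < length ?Q \<Longrightarrow> ?Q ! m = P ! (i + m)" using assms by auto
  have ne: "?Q \<noteq> []" using len assms by auto
  have "is_path V E ?Q" unfolding is_path_def
  proof (intro conjI allI impI)
    show "?Q \<noteq> []" by (rule ne)
    show "set ?Q \<subseteq> V" using assms(1) unfolding is_path_def
      by (meson order_trans set_drop_subset set_take_subset)
    show "distinct ?Q" using assms(1) unfolding is_path_def by simp
    fix k assume k: "Suc k < length ?Q"
    then have "Suc (i + k) < length P" using len assms by simp
    then show "E (?Q ! k) (?Q ! Suc k)"
      using assms(1) nth[of k] nth[OF k] k unfolding is_path_def by simp
  qed
  moreover have "hd ?Q = P ! i" using assms by (simp add: hd_drop_conv_nth)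
  moreover have "last ?Q = P ! j"
    using ne len assms by (simp add: last_conv_nth nth)
  ultimately show ?thesis using len unfolding plen_def by simp
qed

lemma gdist_nth_le:
  assumes "is_path V E P" "i \<le> j" "j < length P"
  shows "gdist V E (P ! i) (P ! j) \<le> j - i"
  using is_path_subpath[OF assms] gdist_le_plen by metis

lemma gdist_le_rdist: "enat (gdist V E u z) \<le> rdist V E U u z"
  unfolding rdist_def by (rule INF_greatest) (use gdist_le_plen[of V E] in force)

lemma rdist_le_initial_segment:
  assumes "is_path V E Q" "j < length Q" "\<forall>k<j. Q ! k \<in> U"
  shows "rdist V E U (hd Q) (Q ! j) \<le> enat j"
proof -
  have sub: "is_path V E (take (Suc j) Q)" "hd (take (Suc j) Q) = hd Q"
    "last (take (Suc j) Q) = Q ! j" "plen (take (Suc j) Q) = j"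
    using is_path_subpath[OF assms(1), of 0 j] assms(2) by (simp_all add: hd_conv_nth)
  then have "take (Suc j) Q \<in> {xs. is_path V E xs \<and> hd xs = hd Q \<and> last xs = Q ! j \<and>
     (\<forall>k. 0 < k \<and> k < length xs - 1 \<longrightarrow> xs ! k \<in> U)}"
    using assms(3) by auto
  then have "rdist V E U (hd Q) (Q ! j) \<le> enat (plen (take (Suc j) Q))"
    unfolding rdist_def by (rule INF_lower)
  then show ?thesis using sub by simp
qed

lemma idx_nth: "distinct P \<Longrightarrow> i < length P \<Longrightarrow> idx P (P ! i) = i"
  unfolding idx_def by (rule the_equality) (auto simp: nth_eq_iff_index_eq)

lemma idx_in_set: "w \<in> set P \<Longrightarrow> distinct P \<Longrightarrow> idx P w < length P \<and> P ! idx P w = w"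
  by (metis idx_nth in_set_conv_nth)

section \<open>Distances along the paths of a shortest path collection\<close>

locale path_collection =
  fixes V :: "'a set" and E R Ps
  assumes graph: "graph V E" and connected_V: "connected_set E V" and R_subset: "R \<subseteq> V"
    and connected_R: "connected_set E R" and R_nonempty: "R \<noteq> {}"
    and collection: "R_shortest_path_collection V E R Ps"
begin

abbreviation "d \<equiv> gdist V E"
abbreviation "sd v \<equiv> setdist V E v R"
abbreviation "A \<equiv> anchors V E R Ps"
abbreviation "U \<equiv> U_set V Ps"

lemma finite_R: "finite R"
  using graph R_subset unfolding graph_def by (meson finite_subset)

lemma setdist_le: "s \<in> R \<Longrightarrow> sd v \<le> d v s"
  unfolding setdist_def using finite_R by simp

lemma setdist_attained: obtains r where "r \<in> R" "sd v = d v r"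
  unfolding setdist_def using finite_R R_nonempty
  by (metis (mono_tags, lifting) Min_in finite_imageI image_iff image_is_empty)

lemma setdist_triangle: "v \<in> V \<Longrightarrow> x \<in> V \<Longrightarrow> sd v \<le> d v x + sd x"
  by (metis R_subset gdist_triangle[OF connected_V] order_trans setdist_attained
      setdist_le subsetD)

lemma gdist_le_setdist_add_card:
  assumes u: "u \<in> V" and s: "s \<in> R"
  shows "d u s \<le> sd u + card R"
proof -
  obtain r where r: "r \<in> R" "sd u = d u r" using setdist_attained by blast
  obtain xs where xs: "is_path R E xs" "hd xs = r" "last xs = s"
    using connected_R r s unfolding connected_set_def by blast
  have "is_path V E xs" using xs(1) R_subset unfolding is_path_def by auto
  moreover have "length xs \<le> card R"
    using xs(1) finite_R by (metis card_mono distinct_card is_path_def)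
  ultimately have "d r s \<le> card R" using gdist_le_plen xs unfolding plen_def by fastforce
  moreover have "d u s \<le> d u r + d r s"
    using gdist_triangle[OF connected_V u] r s R_subset by auto
  ultimately show ?thesis using r by simp
qed

lemma path_collectionD: "P \<in> Ps \<Longrightarrow> is_path V E P \<and> last P \<in> R \<and> plen P = sd (hd P)"
  using collection unfolding R_shortest_path_collection_def by blast

lemma R_notin_U: "s \<in> R \<Longrightarrow> s \<notin> U"
  using collection unfolding R_shortest_path_collection_def U_set_def by blast

lemma nth_in_V: "P \<in> Ps \<Longrightarrow> i < length P \<Longrightarrow> P ! i \<in> V"
  using path_collectionD[of P] unfolding is_path_def by (meson nth_mem subsetD)

lemma anchor_in_V: "w \<in> A \<Longrightarrow> w \<in> V"
proof -
  assume "w \<in> A"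
  then consider (degree) "card {y. H_edge Ps w y} > 2" | (milestone) P where "P \<in> Ps" "milestone V E R P w"
    unfolding anchors_def by blast
  then show ?thesis
  proof cases
    case degree
    then obtain y where "H_edge Ps w y" by fastforce
    then obtain P i where "P \<in> Ps" "Suc i < length P" "P ! i = w \<or> P ! Suc i = w"
      unfolding H_edge_def by blast
    then show ?thesis using nth_in_V[of P i] nth_in_V[of P "Suc i"] by auto
  next
    case milestone
    then show ?thesis using nth_in_V unfolding milestone_def by blast
  qed
qed

lemma gdist_to_last:
  assumes P: "P \<in> Ps" and i: "i < length P"
  shows "d (P ! i) (last P) = length P - 1 - i"
proof -
  have p: "is_path V E P" "last P \<in> R" "plen P = sd (hd P)" using path_collectionD[OF P] by auto
  have ne: "P \<noteq> []" using p by (simp add: is_path_def)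
  have upper: "d (P ! i) (last P) \<le> length P - 1 - i"
    using gdist_nth_le[OF p(1), of i "length P - 1"] i ne by (simp add: last_conv_nth)
  have "sd (hd P) \<le> d (P ! 0) (P ! i) + sd (P ! i)"
    using setdist_triangle nth_in_V[OF P] i ne by (simp add: hd_conv_nth)
  also have "\<dots> \<le> i + d (P ! i) (last P)"
    using gdist_nth_le[OF p(1), of 0 i] setdist_le[OF p(2), of "P ! i"] i by simp
  finally show ?thesis using upper p(3) unfolding plen_def by linarith
qed

lemma gdist_decrease_at_non_anchor:
  assumes P: "P \<in> Ps" and m: "m < length P" and "P ! m \<notin> A" and s: "s \<in> R"
  shows "Suc m < length P \<and> d (P ! m) s = d (P ! Suc m) s + 1"
proof -
  have "\<not> milestone V E R P (P ! m)" using assms unfolding anchors_def by blast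
  then have "Suc m < length P" and "prof V E (last P) (P ! m) s = prof V E (last P) (P ! Suc m) s"
    using m s unfolding milestone_def by (metis Suc_lessI)+
  then show ?thesis
    using gdist_to_last[OF P m] gdist_to_last[OF P] unfolding prof_def by auto
qed

lemma gdist_along_anchor_free_segment:
  assumes P: "P \<in> Ps" and s: "s \<in> R"
  shows "k \<le> j \<Longrightarrow> j < length P \<Longrightarrow> \<forall>m. k \<le> m \<and> m < j \<longrightarrow> P ! m \<notin> A \<Longrightarrow>
    d (P ! k) s = d (P ! j) s + (j - k)"
proof (induction j)
  case 0
  then show ?case by simp
next
  case (Suc j)
  show ?case
  proof (cases "k = Suc j")
    case False
    then have "k \<le> j" using Suc by simp
    then show ?thesis
      using Suc gdist_decrease_at_non_anchor[OF P _ _ s, of j] by simp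
  qed simp
qed

lemma next_anchor:
  assumes P: "P \<in> Ps" and k: "k < length P"
  obtains j where "k \<le> j" "j < length P" "P ! j \<in> A" "\<forall>m. k \<le> m \<and> m < j \<longrightarrow> P ! m \<notin> A"
proof -
  have "last P \<in> A" using P path_collectionD[OF P] unfolding anchors_def milestone_def
    by (force simp: is_path_def last_conv_nth)
  then have "\<exists>j. k \<le> j \<and> j < length P \<and> P ! j \<in> A"
    using k path_collectionD[OF P]
    by (intro exI[of _ "length P - 1"]) (auto simp: is_path_def last_conv_nth)
  then show ?thesis using that unfolding exists_least_iff[of "\<lambda>j. k \<le> j \<and> j < length P \<and> P ! j \<in> A"]
    by (meson order.strict_trans)
qed

section \<open>The anchor distance\<close>

lemma gdist_le_dist_hat:
  assumes u: "u \<in> V"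
  shows "enat (d u w) \<le> dist_hat V E R Ps u w"
  unfolding dist_hat_def
proof (intro INF_greatest)
  fix P z assume P: "P \<in> {P \<in> Ps. w \<in> set P}" and z: "z \<in> prefix_of A P w"
  have p: "is_path V E P" "distinct P" "w \<in> set P" using P path_collectionD by (auto simp: is_path_def)
  have iw: "idx P w < length P" "P ! idx P w = w" using idx_in_set[OF p(3,2)] by auto
  obtain k where k: "z = P ! k" "k \<le> idx P w" using z unfolding prefix_of_def by blast
  have iz: "idx P z = k" using idx_nth[OF p(2)] k iw by simp
  have "d z w \<le> idx P w - idx P z" using gdist_nth_le[OF p(1) k(2) iw(1)] k iw iz by simp
  moreover have "z \<in> V" "w \<in> V" using nth_in_V[of P k] nth_in_V[of P "idx P w"] P k iw by auto
  then have "d u w \<le> d u z + d z w" using gdist_triangle[OF connected_V u] by blast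
  ultimately have "enat (d u w) \<le> enat (d u z) + enat (idx P w - idx P z)" by simp
  also have "\<dots> \<le> rdist V E U u z + enat (idx P w - idx P z)"
    using gdist_le_rdist by (rule add_right_mono)
  finally show "enat (d u w) \<le> rdist V E U u z + enat (idx P w - idx P z)" .
qed

lemma dist_hat_le_through_prefix:
  assumes P: "P \<in> Ps" and "k \<le> j" "j < length P" "\<forall>m. k \<le> m \<and> m < j \<longrightarrow> P ! m \<notin> A"
  shows "dist_hat V E R Ps u (P ! j) \<le> rdist V E U u (P ! k) + enat (j - k)"
proof -
  have dist: "distinct P" using path_collectionD[OF P] by (simp add: is_path_def)
  have idx: "idx P (P ! j) = j" "idx P (P ! k) = k" using idx_nth[OF dist] assms(2,3) by auto
  have "P ! k \<in> prefix_of A P (P ! j)" unfolding prefix_of_def idx using assms by auto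
  then have "dist_hat V E R Ps u (P ! j) \<le>
      rdist V E U u (P ! k) + enat (idx P (P ! j) - idx P (P ! k))"
    unfolding dist_hat_def using P assms(3)
    by (intro INF_lower2[of P] INF_lower) auto
  then show ?thesis using idx by simp
qed

lemma dist_hat_tight_at_some_anchor:
  assumes u: "u \<in> U" and s: "s \<in> R"
  obtains w h where "w \<in> A" "dist_hat V E R Ps u w = enat h" "h + d w s \<le> d u s"
proof -
  have "u \<in> V" "s \<in> V" using u s R_subset unfolding U_set_def by auto
  then obtain Q where Q: "is_path V E Q" "hd Q = u" "last Q = s" "plen Q = d u s"
    using gdist_realized[OF connected_V] by blast
  have "Q \<noteq> []" using Q by (simp add: is_path_def)
  then have "\<exists>j. j < length Q \<and> Q ! j \<notin> U"
    using Q(3) R_notin_U[OF s] by (intro exI[of _ "length Q - 1"]) (simp add: last_conv_nth)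
  then obtain j where j: "j < length Q" "Q ! j \<notin> U" and before_j: "\<forall>k<j. Q ! k \<in> U"
    unfolding exists_least_iff[of "\<lambda>j. j < length Q \<and> Q ! j \<notin> U"] by auto
  define z where "z = Q ! j"
  have "z \<in> V" using Q(1) j unfolding z_def is_path_def by auto
  then obtain P where P: "P \<in> Ps" "z \<in> set P" using j unfolding z_def U_set_def by auto
  obtain k where k: "k < length P" "P ! k = z" using P(2) by (meson in_set_conv_nth)
  obtain j' where j': "k \<le> j'" "j' < length P" "P ! j' \<in> A"
    and free: "\<forall>m. k \<le> m \<and> m < j' \<longrightarrow> P ! m \<notin> A"
    using next_anchor[OF P(1) k(1)] by blast
  have "dist_hat V E R Ps u (P ! j') \<le> rdist V E U u z + enat (j' - k)"
    using dist_hat_le_through_prefix[OF P(1) j'(1,2) free] k(2) by simp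
  also have "\<dots> \<le> enat j + enat (j' - k)"
    using rdist_le_initial_segment[OF Q(1) j(1) before_j] Q(2) unfolding z_def
    by (intro add_right_mono) simp
  finally have "dist_hat V E R Ps u (P ! j') \<le> enat (j + (j' - k))" by simp
  then obtain h where h: "dist_hat V E R Ps u (P ! j') = enat h" "h \<le> j + (j' - k)"
    by (metis enat_ile enat_ord_simps(1))
  have "d z s = d (P ! j') s + (j' - k)"
    using gdist_along_anchor_free_segment[OF P(1) s j'(1,2) free] k by simp
  moreover have "d z s \<le> length Q - 1 - j"
    using gdist_nth_le[OF Q(1), of j "length Q - 1"] j Q(3) \<open>Q \<noteq> []\<close>
    unfolding z_def by (simp add: last_conv_nth)
  ultimately have "h + d (P ! j') s \<le> d u s" using h Q(4) j unfolding plen_def by linarith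
  then show ?thesis using that j'(3) h(1) by blast
qed

section \<open>Recovering distances to R from the anchor-distance profile\<close>

definition excess :: "'a \<Rightarrow> 'a \<Rightarrow> int" where
  "excess u s = int (d u s) - int (sd u)"

definition anchor_estimate :: "'a \<Rightarrow> 'a \<Rightarrow> 'a \<Rightarrow> int" where
  "anchor_estimate u s w = prof_hat V E R Ps u w + int (d w s) - int (sd w)"

lemma excess_le_anchor_estimate:
  assumes u: "u \<in> U" and s: "s \<in> R" and w: "w \<in> A"
  shows "excess u s \<le> anchor_estimate u s w"
proof -
  have uV: "u \<in> V" using u unfolding U_set_def by auto
  have bound: "d u s \<le> sd u + card R" using gdist_le_setdist_add_card[OF uV s] .
  have ws: "sd w \<le> d w s" using setdist_le[OF s] .
  show ?thesis
  proof (cases "dist_hat V E R Ps u w")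
    case (enat h)
    then have "d u w \<le> h" using gdist_le_dist_hat[OF uV, of w] by simp
    moreover have "d u s \<le> d u w + d w s"
      using gdist_triangle[OF connected_V uV anchor_in_V[OF w]] s R_subset by auto
    ultimately show ?thesis
      using enat bound ws unfolding excess_def anchor_estimate_def prof_hat_def by simp
  next
    case infinity
    then show ?thesis using bound ws unfolding excess_def anchor_estimate_def prof_hat_def by simp
  qed
qed

lemma excess_eq_Min_anchor_estimate:
  assumes u: "u \<in> U" and s: "s \<in> R"
  shows "excess u s = Min (anchor_estimate u s ` A)"
proof (rule Min_eqI[symmetric])
  show "finite (anchor_estimate u s ` A)"
    using graph anchor_in_V unfolding graph_def by (meson finite_imageI finite_subset subsetI)
  show "\<And>e. e \<in> anchor_estimate u s ` A \<Longrightarrow> excess u s \<le> e"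
    using excess_le_anchor_estimate[OF u s] by blast
  obtain w h where w: "w \<in> A" "dist_hat V E R Ps u w = enat h" "h + d w s \<le> d u s"
    using dist_hat_tight_at_some_anchor[OF u s] .
  then have "anchor_estimate u s w \<le> excess u s"
    unfolding excess_def anchor_estimate_def prof_hat_def by simp
  then have "anchor_estimate u s w = excess u s"
    using excess_le_anchor_estimate[OF u s w(1)] by simp
  then show "excess u s \<in> anchor_estimate u s ` A" using w(1) by force
qed

end

theorem lemma3p5:
  fixes V :: "'a set" and E :: "'a \<Rightarrow> 'a \<Rightarrow> bool" and R :: "'a set"
    and Ps :: "'a list set" and sR u1 u2 :: 'a
  assumes "graph V E"
    and "connected_set E V"
    and "R \<subseteq> V" and "connected_set E R" and "sR \<in> R"
    and "R_shortest_path_collection V E R Ps"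
    and "u1 \<in> U_set V Ps" and "u2 \<in> U_set V Ps"
    and "\<forall>w\<in>anchors V E R Ps. prof_hat V E R Ps u1 w = prof_hat V E R Ps u2 w"
  shows "\<forall>s\<in>R. prof V E sR u1 s = prof V E sR u2 s"
proof
  interpret path_collection V E R Ps
    using assms(1-6) by unfold_locales auto
  have excess_eq: "excess u1 s = excess u2 s" if "s \<in> R" for s
  proof -
    have "anchor_estimate u1 s ` A = anchor_estimate u2 s ` A"
      using assms(9) unfolding anchor_estimate_def by simp
    then show ?thesis using excess_eq_Min_anchor_estimate assms(7,8) that by metis
  qed
  fix s assume "s \<in> R"
  then show "prof V E sR u1 s = prof V E sR u2 s"
    using excess_eq[of s] excess_eq[OF assms(5)] unfolding prof_def excess_def by simp
qed

end
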